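(* Let $G$ be a finite group and let $N$ be a non-trivial normal subgroup of $G$ with $|N|=p^a$ for some prime $p$. Then for every pair $x_1,x_2$ of elements of $G$ there exist $n_1,n_2\in N$ such that $p$ divides the order of $\langle x_1n_1,x_2n_2\rangle$. *)

theory Defs
  imports "HOL-Algebra.Algebra"
begin

end

(*
  Replace N by its centre Z, a non-trivial abelian normal p-subgroup of G (a non-trivial
  p-group has non-trivial centre by the class equation). Suppose every subgroup
  <x1 n1, x2 n2> with n1, n2 in Z has order prime to p. Then K = <x1 n1, x2 n2> meets Z
  trivially and H = <x1, x2> lies in ZK, so sending q in H to the unique element of K in
  its coset qZ is a homomorphism sigma with sigma x1 = x1 n1 and sigma x2 = x2 n2. As |H|
  is prime to |Z| and Z is abelian, the cocycle q -> q^-1 sigma(q) is a coboundary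
  (average it over H and take an |H|-th root in Z): sigma is conjugation by some v in Z.
  So the |Z|^2 pairs (n1, n2) would all come from the |Z| elements v, although |Z| > 1.
*)
theory Submission
  imports Defs
begin

lemma (in group) m_inv_cancel_left [simp]:
  "x \<in> carrier G \<Longrightarrow> y \<in> carrier G \<Longrightarrow> x \<otimes> (inv x \<otimes> y) = y"
  by (simp add: m_assoc[symmetric])

lemma (in group) inv_m_cancel_left [simp]:
  "x \<in> carrier G \<Longrightarrow> y \<in> carrier G \<Longrightarrow> inv x \<otimes> (x \<otimes> y) = y"
  by (simp add: m_assoc[symmetric])

section \<open>The centre of a p-group\<close>

lemma (in group_action) card_fixed_points_mod_prime:
  assumes fin: "finite E" and p: "Factorial_Ring.prime (p::nat)" and ord: "order G = p ^ k"
  shows "card {x \<in> E. \<forall>g \<in> carrier G. \<phi> g x = x} mod p = card E mod p"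
proof -
  define F where "F = {x \<in> E. \<forall>g \<in> carrier G. \<phi> g x = x}"
  define Orb where "Orb = orbits G E \<phi>"
  define Singletons where "Singletons = (\<lambda>x. {x}) ` F"
  have finOrb: "finite Orb"
    using fin unfolding Orb_def orbits_def by (simp add: setcompr_eq_image)
  have Singletons: "Singletons \<subseteq> Orb"
  proof
    fix s assume "s \<in> Singletons"
    then obtain x where x: "x \<in> F" "s = {x}" unfolding Singletons_def by blast
    then have "orbit G \<phi> x = {x}" using orbit_refl[of x] unfolding F_def by (auto simp: orbit_def)
    with x show "s \<in> Orb" unfolding Orb_def orbits_def F_def by blast
  qed
  have p_dvd: "p dvd card s" if s: "s \<in> Orb - Singletons" for s
  proof -
    obtain x where x: "x \<in> E" "s = orbit G \<phi> x" using s unfolding Orb_def orbits_def by blast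
    have "card s dvd p ^ k"
      using orbit_stabilizer_theorem[OF x(1)] x(2) ord by (metis dvd_triv_left)
    then obtain j where j: "card s = p ^ j" using p by (auto simp: divides_primepow_nat)
    have "j \<noteq> 0"
    proof
      assume "j = 0"
      then obtain y where "s = {y}" using j card_1_singletonE by auto
      moreover have "x \<in> s" using orbit_refl[OF x(1)] x(2) by simp
      ultimately have "s = {x}" by simp
      then have "x \<in> F" using x unfolding F_def orbit_def by blast
      with \<open>s = {x}\<close> s show False unfolding Singletons_def by blast
    qed
    with j show ?thesis by simp
  qed
  have "card E = (\<Sum>s\<in>Orb. card s)"
    using disjoint_sum[OF fin, of "\<lambda>_. 1::nat"] unfolding Orb_def by simp
  also have "\<dots> = (\<Sum>s\<in>Orb - Singletons. card s) + (\<Sum>s\<in>Singletons. card s)"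
    using sum.subset_diff[OF Singletons finOrb] .
  also have "(\<Sum>s\<in>Singletons. card s) = card F"
    unfolding Singletons_def by (simp add: sum.reindex inj_on_def)
  finally have "card E = (\<Sum>s\<in>Orb - Singletons. card s) + card F" .
  moreover have "p dvd (\<Sum>s\<in>Orb - Singletons. card s)"
    using p_dvd by (intro dvd_sum) blast
  ultimately show ?thesis
    unfolding F_def[symmetric] by auto
qed

definition center :: "('a, 'b) monoid_scheme \<Rightarrow> 'a set" where
  "center G = {z \<in> carrier G. \<forall>y \<in> carrier G. z \<otimes>\<^bsub>G\<^esub> y = y \<otimes>\<^bsub>G\<^esub> z}"

lemma (in group) center_subgroup: "subgroup (center G) G"
proof (rule subgroupI)
  fix x y assume "x \<in> center G" and "y \<in> center G"
  then have xG: "x \<in> carrier G" and yG: "y \<in> carrier G"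
    and x: "\<And>g. g \<in> carrier G \<Longrightarrow> x \<otimes> g = g \<otimes> x"
    and y: "\<And>g. g \<in> carrier G \<Longrightarrow> y \<otimes> g = g \<otimes> y"
    by (auto simp: center_def)
  have "x \<otimes> y \<otimes> g = g \<otimes> (x \<otimes> y)" if g: "g \<in> carrier G" for g
  proof -
    have "x \<otimes> y \<otimes> g = x \<otimes> (g \<otimes> y)" using y[OF g] g xG yG by (simp add: m_assoc)
    also have "\<dots> = g \<otimes> (x \<otimes> y)" using x[OF g] g xG yG by (simp add: m_assoc[symmetric])
    finally show ?thesis .
  qed
  with xG yG show "x \<otimes> y \<in> center G" by (simp add: center_def)
  have "inv x \<otimes> g = g \<otimes> inv x" if g: "g \<in> carrier G" for g
  proof -
    have "inv x \<otimes> g = inv x \<otimes> (g \<otimes> x) \<otimes> inv x" using g xG by (simp add: m_assoc)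
    also have "\<dots> = inv x \<otimes> (x \<otimes> g) \<otimes> inv x" using x[OF g] by simp
    also have "\<dots> = g \<otimes> inv x" using g xG by (simp add: m_assoc[symmetric])
    finally show ?thesis .
  qed
  with xG show "inv x \<in> center G" by (simp add: center_def)
qed (auto simp: center_def)

lemma (in group) comm_group_center: "comm_group (G\<lparr>carrier := center G\<rparr>)"
proof (rule group.group_comm_groupI[OF subgroup_imp_group[OF center_subgroup]])
  fix x y assume "x \<in> carrier (G\<lparr>carrier := center G\<rparr>)" "y \<in> carrier (G\<lparr>carrier := center G\<rparr>)"
  then have "x \<in> center G" "y \<in> carrier G" by (auto simp: center_def)
  then show "x \<otimes>\<^bsub>G\<lparr>carrier := center G\<rparr>\<^esub> y = y \<otimes>\<^bsub>G\<lparr>carrier := center G\<rparr>\<^esub> x"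
    unfolding center_def by simp
qed

lemma (in group) center_of_normal_subgroup_normal:
  assumes N: "N \<lhd> G"
  shows "center (G\<lparr>carrier := N\<rparr>) \<lhd> G"
proof -
  have N_sub: "subgroup N G" using N normal_imp_subgroup by blast
  then have N_carrier: "N \<subseteq> carrier G" by (rule subgroup.subset)
  have Z: "center (G\<lparr>carrier := N\<rparr>) = {z \<in> N. \<forall>y \<in> N. z \<otimes> y = y \<otimes> z}"
    by (simp add: center_def)
  have "subgroup (center (G\<lparr>carrier := N\<rparr>)) G"
    by (rule incl_subgroup[OF N_sub group.center_subgroup[OF subgroup_imp_group[OF N_sub]]])
  moreover have "g \<otimes> z \<otimes> inv g \<in> center (G\<lparr>carrier := N\<rparr>)"
    if g: "g \<in> carrier G" and z: "z \<in> N" "\<forall>y \<in> N. z \<otimes> y = y \<otimes> z" for g z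
  proof -
    have "g \<otimes> z \<otimes> inv g \<otimes> y = y \<otimes> (g \<otimes> z \<otimes> inv g)" if y: "y \<in> N" for y
    proof -
      have yG: "y \<in> carrier G" and zG: "z \<in> carrier G" using y z(1) N_carrier by auto
      have "g \<otimes> z \<otimes> inv g \<otimes> y = g \<otimes> (z \<otimes> (inv g \<otimes> y \<otimes> g)) \<otimes> inv g"
        using g yG zG by (simp add: m_assoc)
      also have "z \<otimes> (inv g \<otimes> y \<otimes> g) = (inv g \<otimes> y \<otimes> g) \<otimes> z"
        using z normal.inv_op_closed1[OF N g y] by blast
      also have "g \<otimes> (inv g \<otimes> y \<otimes> g \<otimes> z) \<otimes> inv g = y \<otimes> (g \<otimes> z \<otimes> inv g)"
        using g yG zG by (simp add: m_assoc)
      finally show ?thesis .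
    qed
    then show ?thesis unfolding Z using normal.inv_op_closed2[OF N g z(1)] by simp
  qed
  ultimately show ?thesis by (auto simp: normal_inv_iff Z)
qed

lemma (in group) p_dvd_card_center:
  assumes "finite (carrier G)" and p: "Factorial_Ring.prime (p::nat)"
    and "order G = p ^ k" and "k \<noteq> 0"
  shows "p dvd card (center G)"
proof -
  interpret group_action G "carrier G" "\<lambda>g. \<lambda>h \<in> carrier G. g \<otimes> h \<otimes> inv g"
    by (rule action_by_conjugation)
  have fixed_iff_comm: "x \<otimes> g = g \<otimes> x \<longleftrightarrow> (\<lambda>h \<in> carrier G. g \<otimes> h \<otimes> inv g) x = x"
    if "x \<in> carrier G" "g \<in> carrier G" for x g
    using inv_solve_right'[of x "g \<otimes> x" g] that by auto
  have "center G = {x \<in> carrier G. \<forall>g \<in> carrier G. (\<lambda>h \<in> carrier G. g \<otimes> h \<otimes> inv g) x = x}"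
    unfolding center_def by (intro Collect_cong conj_cong refl ball_cong) (rule fixed_iff_comm)
  with card_fixed_points_mod_prime[OF assms(1) p assms(3)] assms(3,4)
  show ?thesis by (simp add: order_def mod_eq_0_iff_dvd)
qed

lemma (in group) card_subgroup_dvd:
  assumes "subgroup A G" "subgroup B G" "A \<subseteq> B"
  shows "card A dvd card B"
proof -
  interpret B: group "G\<lparr>carrier := B\<rparr>" using subgroup_imp_group[OF assms(2)] .
  from B.lagrange[OF subgroup_incl[OF assms]] show ?thesis
    by (simp add: order_def) (metis dvd_triv_right)
qed

lemma (in group) exists_abelian_normal_p_subgroup:
  assumes fin: "finite (carrier G)" and N: "N \<lhd> G" "N \<noteq> {\<one>}"
    and p: "Factorial_Ring.prime p" and card_N: "card N = p ^ a"
  shows "\<exists>Z. Z \<lhd> G \<and> comm_group (G\<lparr>carrier := Z\<rparr>) \<and> Z \<subseteq> N \<and> (\<exists>j. j \<noteq> 0 \<and> card Z = p ^ j)"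
proof -
  have N_sub: "subgroup N G" using normal_imp_subgroup[OF N(1)] .
  interpret N: group "G\<lparr>carrier := N\<rparr>" using subgroup_imp_group[OF N_sub] .
  define Z where "Z = center (G\<lparr>carrier := N\<rparr>)"
  have Z_normal: "Z \<lhd> G" unfolding Z_def using center_of_normal_subgroup_normal[OF N(1)] .
  have ZN: "Z \<subseteq> N" unfolding Z_def center_def by auto
  have finN: "finite N" using finite_subset[OF subgroup.subset[OF N_sub] fin] .
  have "a \<noteq> 0"
  proof
    assume "a = 0"
    with card_N subgroup.one_closed[OF N_sub] have "N = {\<one>}" by (auto simp: card_1_singleton_iff)
    with N(2) show False ..
  qed
  then have "p dvd card Z"
    using N.p_dvd_card_center[OF _ p] finN card_N unfolding Z_def by (simp add: order_def)
  moreover obtain j where j: "card Z = p ^ j"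
    using card_subgroup_dvd[OF normal_imp_subgroup[OF Z_normal] N_sub ZN] card_N p
    by (auto simp: divides_primepow_nat)
  ultimately have "j \<noteq> 0" using p by (metis nat_dvd_1_iff_1 not_prime_1 power_0)
  moreover have "comm_group (G\<lparr>carrier := Z\<rparr>)" unfolding Z_def using N.comm_group_center by simp
  ultimately show ?thesis using Z_normal ZN j by blast
qed

section \<open>Coprime cocycles with abelian values\<close>

lemma (in group) finprod_conj:
  assumes Z: "Z \<lhd> G" "comm_group (G\<lparr>carrier := Z\<rparr>)" and r: "r \<in> carrier G"
    and "finite A" and "f \<in> A \<rightarrow> Z"
  shows "(\<Otimes>\<^bsub>G\<lparr>carrier := Z\<rparr>\<^esub>q\<in>A. inv r \<otimes> f q \<otimes> r)
    = inv r \<otimes> (\<Otimes>\<^bsub>G\<lparr>carrier := Z\<rparr>\<^esub>q\<in>A. f q) \<otimes> r"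
  using \<open>finite A\<close> \<open>f \<in> A \<rightarrow> Z\<close>
proof (induction A rule: finite_induct)
  case empty
  interpret Zg: comm_group "G\<lparr>carrier := Z\<rparr>" by (rule Z(2))
  show ?case using r by simp
next
  case (insert x A)
  interpret Zg: comm_group "G\<lparr>carrier := Z\<rparr>" by (rule Z(2))
  have ZG: "Z \<subseteq> carrier G" using Z(1) normal_imp_subgroup subgroup.subset by blast
  have conj_Z: "inv r \<otimes> z \<otimes> r \<in> Z" if "z \<in> Z" for z
    using normal.inv_op_closed1[OF Z(1) r that] .
  have fx: "f x \<in> Z" and fA: "f \<in> A \<rightarrow> Z" using insert.prems by auto
  define P where "P = (\<Otimes>\<^bsub>G\<lparr>carrier := Z\<rparr>\<^esub>q\<in>A. f q)"
  have P: "P \<in> Z" unfolding P_def using Zg.finprod_closed[of f A] fA by simp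
  have "(\<Otimes>\<^bsub>G\<lparr>carrier := Z\<rparr>\<^esub>q\<in>insert x A. inv r \<otimes> f q \<otimes> r)
      = (inv r \<otimes> f x \<otimes> r) \<otimes> (inv r \<otimes> P \<otimes> r)"
    using Zg.finprod_insert[OF insert.hyps, of "\<lambda>q. inv r \<otimes> f q \<otimes> r"] conj_Z fx fA insert.IH
    unfolding P_def by auto
  also have "\<dots> = inv r \<otimes> (f x \<otimes> P) \<otimes> r"
    using r fx P ZG by (simp add: m_assoc subsetD)
  also have "f x \<otimes> P = (\<Otimes>\<^bsub>G\<lparr>carrier := Z\<rparr>\<^esub>q\<in>insert x A. f q)"
    using Zg.finprod_insert[OF insert.hyps, of f] fx fA unfolding P_def by auto
  finally show ?case .
qed

lemma (in group) cocycle_finprod_eq: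
  assumes Z: "Z \<lhd> G" "comm_group (G\<lparr>carrier := Z\<rparr>)"
    and H: "subgroup H G" "finite H" and \<delta>: "\<delta> \<in> H \<rightarrow> Z"
    and cocycle: "\<And>q r. q \<in> H \<Longrightarrow> r \<in> H \<Longrightarrow> \<delta> (q \<otimes> r) = inv r \<otimes> \<delta> q \<otimes> r \<otimes> \<delta> r"
    and r: "r \<in> H"
  shows "(\<Otimes>\<^bsub>G\<lparr>carrier := Z\<rparr>\<^esub>q\<in>H. \<delta> q)
    = inv r \<otimes> (\<Otimes>\<^bsub>G\<lparr>carrier := Z\<rparr>\<^esub>q\<in>H. \<delta> q) \<otimes> r \<otimes> \<delta> r [^] card H"
proof -
  interpret Zg: comm_group "G\<lparr>carrier := Z\<rparr>" by (rule Z(2))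
  have rG: "r \<in> carrier G" using subgroup.mem_carrier[OF H(1) r] .
  have conj_Z: "inv r \<otimes> z \<otimes> r \<in> Z" if "z \<in> Z" for z
    using normal.inv_op_closed1[OF Z(1) rG that] .
  have "(\<lambda>q. q \<otimes> r) ` H = H #> r" by (auto simp: r_coset_def)
  with subgroup.rcos_const[OF H(1) is_group r] have shift: "(\<lambda>q. q \<otimes> r) ` H = H" by simp
  have "(\<Otimes>\<^bsub>G\<lparr>carrier := Z\<rparr>\<^esub>q\<in>H. \<delta> q) = (\<Otimes>\<^bsub>G\<lparr>carrier := Z\<rparr>\<^esub>q\<in>H. \<delta> (q \<otimes> r))"
    using Zg.finprod_reindex[of \<delta> "\<lambda>q. q \<otimes> r" H] inj_on_g[OF subgroup.subset[OF H(1)] rG]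
      shift \<delta> by simp
  also have "\<dots> = (\<Otimes>\<^bsub>G\<lparr>carrier := Z\<rparr>\<^esub>q\<in>H. (inv r \<otimes> \<delta> q \<otimes> r) \<otimes> \<delta> r)"
    using cocycle[OF _ r] \<delta> conj_Z r
    by (intro Zg.finprod_cong') (auto intro: subgroup.m_closed[OF normal_imp_subgroup[OF Z(1)]])
  also have "\<dots> = (\<Otimes>\<^bsub>G\<lparr>carrier := Z\<rparr>\<^esub>q\<in>H. inv r \<otimes> \<delta> q \<otimes> r) \<otimes> (\<Otimes>\<^bsub>G\<lparr>carrier := Z\<rparr>\<^esub>q\<in>H. \<delta> r)"
    using Zg.finprod_multf[of "\<lambda>q. inv r \<otimes> \<delta> q \<otimes> r" H "\<lambda>_. \<delta> r"] conj_Z \<delta> r by auto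
  also have "\<dots> = inv r \<otimes> (\<Otimes>\<^bsub>G\<lparr>carrier := Z\<rparr>\<^esub>q\<in>H. \<delta> q) \<otimes> r \<otimes> \<delta> r [^] card H"
    using finprod_conj[OF Z rG H(2) \<delta>] Zg.finprod_const[of "\<delta> r" H] funcset_mem[OF \<delta> r]
    by (simp add: nat_pow_consistent[symmetric])
  finally show ?thesis .
qed

lemma (in group) conj_nat_pow:
  assumes "r \<in> carrier G" "y \<in> carrier G"
  shows "inv r \<otimes> y [^] (n::nat) \<otimes> r = (inv r \<otimes> y \<otimes> r) [^] n"
proof (induction n)
  case 0
  then show ?case using assms by simp
next
  case (Suc n)
  have "inv r \<otimes> y [^] Suc n \<otimes> r = (inv r \<otimes> y [^] n \<otimes> r) \<otimes> (inv r \<otimes> y \<otimes> r)"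
    using assms by (simp add: m_assoc)
  then show ?case using Suc assms by simp
qed

lemma (in group) coprime_cocycle_is_coboundary:
  assumes Z: "Z \<lhd> G" "comm_group (G\<lparr>carrier := Z\<rparr>)"
    and H: "subgroup H G" "finite H" and cop: "coprime (card H) (card Z)" and \<delta>: "\<delta> \<in> H \<rightarrow> Z"
    and cocycle: "\<And>q r. q \<in> H \<Longrightarrow> r \<in> H \<Longrightarrow> \<delta> (q \<otimes> r) = inv r \<otimes> \<delta> q \<otimes> r \<otimes> \<delta> r"
  shows "\<exists>v\<in>Z. \<forall>r\<in>H. \<delta> r = inv (inv r \<otimes> v \<otimes> r) \<otimes> v"
proof -
  interpret Zg: comm_group "G\<lparr>carrier := Z\<rparr>" by (rule Z(2))
  have ZG: "Z \<subseteq> carrier G" using subgroup.subset[OF normal_imp_subgroup[OF Z(1)]] .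
  define u where "u = (\<Otimes>\<^bsub>G\<lparr>carrier := Z\<rparr>\<^esub>q\<in>H. \<delta> q)"
  have uZ: "u \<in> Z" unfolding u_def using Zg.finprod_closed[of \<delta> H] \<delta> by simp
  have "card H \<noteq> 0" using H subgroup.one_closed[OF H(1)] by auto
  then obtain x y where xy: "card H * x = card Z * y + 1"
    using bezout_nat[of "card H" "card Z"] cop by (auto simp: coprime_iff_gcd_eq_1)
  \<comment> \<open>\<open>v\<close> is an \<open>|H|\<close>-th root of the product \<open>u\<close> of all \<open>\<delta> q\<close>, since \<open>|H| x = 1\<close> modulo \<open>|Z|\<close>.\<close>
  define v where "v = u [^] x"
  have vZ: "v \<in> Z"
    unfolding v_def using Zg.nat_pow_closed[of u x] uZ by (simp add: nat_pow_consistent[symmetric])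
  have pow_card_Z: "w [^] card Z = \<one>" if "w \<in> Z" for w
    using Zg.pow_order_eq_1[of w] that by (simp add: order_def nat_pow_consistent[symmetric])
  have "\<delta> r = inv (inv r \<otimes> v \<otimes> r) \<otimes> v" if r: "r \<in> H" for r
  proof -
    have rG: "r \<in> carrier G" using subgroup.mem_carrier[OF H(1) r] .
    have dZ: "\<delta> r \<in> Z" using funcset_mem[OF \<delta> r] .
    with ZG have dG: "\<delta> r \<in> carrier G" by blast
    define c where "c = inv r \<otimes> u \<otimes> r"
    have cZ: "c \<in> Z" unfolding c_def using normal.inv_op_closed1[OF Z(1) rG uZ] .
    have uG: "u \<in> carrier G" and cG: "c \<in> carrier G" using uZ cZ ZG by auto
    have comm: "inv c \<otimes> u = u \<otimes> inv c"
      using Zg.m_comm[of "inv c" u] subgroup.m_inv_closed[OF normal_imp_subgroup[OF Z(1)] cZ] uZ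
      by simp
    have "\<delta> r = (\<delta> r [^] card Z) [^] y \<otimes> \<delta> r"
      using pow_card_Z[OF dZ] dG by simp
    also have "\<dots> = (\<delta> r [^] card H) [^] x"
      using dG xy by (simp add: nat_pow_pow nat_pow_mult)
    also have "\<delta> r [^] card H = inv c \<otimes> u"
      using cocycle_finprod_eq[OF Z H \<delta> cocycle r] cG dG uG
      unfolding u_def[symmetric] c_def[symmetric] by (simp add: inv_solve_left)
    also have "(inv c \<otimes> u) [^] x = inv c [^] x \<otimes> v"
      using pow_mult_distrib[OF comm] cG uG unfolding v_def by simp
    also have "inv c [^] x = inv (inv r \<otimes> v \<otimes> r)"
      unfolding v_def c_def using rG uG by (simp add: nat_pow_inv conj_nat_pow)
    finally show ?thesis .
  qed
  with vZ show ?thesis by blast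
qed

lemma (in group) coset_preserving_hom_is_conj:
  assumes Z: "Z \<lhd> G" "comm_group (G\<lparr>carrier := Z\<rparr>)"
    and H: "subgroup H G" "finite H" and cop: "coprime (card H) (card Z)"
    and \<sigma>: "\<sigma> ` H \<subseteq> carrier G" and coset: "\<And>q. q \<in> H \<Longrightarrow> inv q \<otimes> \<sigma> q \<in> Z"
    and hom: "\<And>q r. q \<in> H \<Longrightarrow> r \<in> H \<Longrightarrow> \<sigma> (q \<otimes> r) = \<sigma> q \<otimes> \<sigma> r"
  shows "\<exists>v\<in>Z. \<forall>q\<in>H. \<sigma> q = inv v \<otimes> q \<otimes> v"
proof -
  have HG: "H \<subseteq> carrier G" using subgroup.subset[OF H(1)] .
  have ZG: "Z \<subseteq> carrier G" using subgroup.subset[OF normal_imp_subgroup[OF Z(1)]] .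
  have "inv (q \<otimes> r) \<otimes> \<sigma> (q \<otimes> r) = inv r \<otimes> (inv q \<otimes> \<sigma> q) \<otimes> r \<otimes> (inv r \<otimes> \<sigma> r)"
    if "q \<in> H" "r \<in> H" for q r
  proof -
    have "q \<in> carrier G" "r \<in> carrier G" "\<sigma> q \<in> carrier G" "\<sigma> r \<in> carrier G"
      using that HG \<sigma> by auto
    then show ?thesis using hom[OF that] by (simp add: inv_mult_group m_assoc)
  qed
  with coprime_cocycle_is_coboundary[OF Z H cop, of "\<lambda>q. inv q \<otimes> \<sigma> q"] coset
  obtain v where v: "v \<in> Z" and cob: "\<And>q. q \<in> H \<Longrightarrow> inv q \<otimes> \<sigma> q = inv (inv q \<otimes> v \<otimes> q) \<otimes> v"
    by (auto simp: m_assoc)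
  have "\<sigma> q = inv v \<otimes> q \<otimes> v" if q: "q \<in> H" for q
  proof -
    have qG: "q \<in> carrier G" and vG: "v \<in> carrier G" and \<sigma>G: "\<sigma> q \<in> carrier G"
      using q v HG ZG \<sigma> by auto
    have "\<sigma> q = q \<otimes> (inv q \<otimes> \<sigma> q)" using qG \<sigma>G by simp
    also have "\<dots> = inv v \<otimes> q \<otimes> v" using cob[OF q] qG vG by (simp add: inv_mult_group m_assoc)
    finally show ?thesis .
  qed
  with v show ?thesis by blast
qed

section \<open>Perturbing generators by an abelian normal subgroup\<close>

lemma (in group) coprime_subgroups_inter_trivial:
  assumes H: "subgroup H G" and K: "subgroup K G" and "coprime (card H) (card K)"
  shows "H \<inter> K = {\<one>}"
proof -
  have I: "subgroup (H \<inter> K) G" by (rule subgroups_Inter_pair[OF H K])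
  have "card (H \<inter> K) dvd card H" "card (H \<inter> K) dvd card K"
    using card_subgroup_dvd[OF I] H K by auto
  with assms(3) have "card (H \<inter> K) = 1" using coprime_common_divisor_nat by blast
  moreover have "\<one> \<in> H \<inter> K" using subgroup.one_closed[OF I] .
  ultimately show ?thesis by (metis card_1_singletonE singletonD)
qed

lemma (in group) complement_coset_rep_unique:
  assumes Z: "subgroup Z G" and K: "subgroup K G" "K \<inter> Z = {\<one>}"
    and q: "q \<in> carrier G" and k: "k \<in> K" "k' \<in> K"
    and "inv q \<otimes> k \<in> Z" "inv q \<otimes> k' \<in> Z"
  shows "k = k'"
proof -
  have kG: "k \<in> carrier G" "k' \<in> carrier G" using k subgroup.mem_carrier[OF K(1)] by auto
  have "inv k \<otimes> k' = inv (inv q \<otimes> k) \<otimes> (inv q \<otimes> k')"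
    using q kG by (simp add: inv_mult_group m_assoc)
  also have "\<dots> \<in> Z"
    using subgroup.m_closed[OF Z subgroup.m_inv_closed[OF Z assms(7)] assms(8)] .
  finally have "inv k \<otimes> k' \<in> K \<inter> Z"
    using k by (auto intro: subgroup.m_closed[OF K(1)] subgroup.m_inv_closed[OF K(1)])
  with K(2) have "inv k \<otimes> k' = \<one>" by blast
  with kG show ?thesis by (simp add: inv_solve_left' flip: inv_solve_left)
qed

lemma (in group) exists_hom_into_complement:
  assumes Z: "Z \<lhd> G" and K: "subgroup K G" "K \<inter> Z = {\<one>}"
    and H: "subgroup H G" "H \<subseteq> Z <#> K"
  shows "\<exists>\<sigma>. (\<forall>q\<in>H. \<sigma> q \<in> K \<and> inv q \<otimes> \<sigma> q \<in> Z) \<and> (\<forall>q\<in>H. \<forall>r\<in>H. \<sigma> (q \<otimes> r) = \<sigma> q \<otimes> \<sigma> r)"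
proof -
  have Zs: "subgroup Z G" using normal_imp_subgroup[OF Z] .
  have rep: "\<exists>k. k \<in> K \<and> inv q \<otimes> k \<in> Z" if "q \<in> H" for q
  proof -
    from that H(2) obtain z k where zk: "z \<in> Z" "k \<in> K" "q = z \<otimes> k"
      unfolding set_mult_def by blast
    have zG: "z \<in> carrier G" and kG: "k \<in> carrier G"
      using zk subgroup.mem_carrier[OF Zs] subgroup.mem_carrier[OF K(1)] by auto
    have "inv q \<otimes> k = inv k \<otimes> inv z \<otimes> k"
      using zk(3) zG kG by (simp add: inv_mult_group)
    also have "\<dots> \<in> Z"
      using normal.inv_op_closed1[OF Z kG subgroup.m_inv_closed[OF Zs zk(1)]] .
    finally show ?thesis using zk(2) by blast
  qed
  define \<sigma> where "\<sigma> q = (SOME k. k \<in> K \<and> inv q \<otimes> k \<in> Z)" for q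
  have \<sigma>: "\<sigma> q \<in> K" "inv q \<otimes> \<sigma> q \<in> Z" if "q \<in> H" for q
    using someI_ex[OF rep[OF that]] unfolding \<sigma>_def by auto
  have "\<sigma> (q \<otimes> r) = \<sigma> q \<otimes> \<sigma> r" if q: "q \<in> H" and r: "r \<in> H" for q r
  proof (rule complement_coset_rep_unique[OF Zs K])
    have qG: "q \<in> carrier G" and rG: "r \<in> carrier G" using q r subgroup.mem_carrier[OF H(1)] by auto
    have \<sigma>G: "\<sigma> q \<in> carrier G" "\<sigma> r \<in> carrier G" using \<sigma> q r subgroup.mem_carrier[OF K(1)] by auto
    show "q \<otimes> r \<in> carrier G" using qG rG by simp
    show "\<sigma> (q \<otimes> r) \<in> K" "inv (q \<otimes> r) \<otimes> \<sigma> (q \<otimes> r) \<in> Z"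
      using \<sigma> subgroup.m_closed[OF H(1) q r] by auto
    show "\<sigma> q \<otimes> \<sigma> r \<in> K" using \<sigma> q r subgroup.m_closed[OF K(1)] by auto
    have "inv (q \<otimes> r) \<otimes> (\<sigma> q \<otimes> \<sigma> r) = inv r \<otimes> (inv q \<otimes> \<sigma> q) \<otimes> r \<otimes> (inv r \<otimes> \<sigma> r)"
      using qG rG \<sigma>G by (simp add: inv_mult_group m_assoc)
    also have "\<dots> \<in> Z"
      using normal.inv_op_closed1[OF Z rG \<sigma>(2)[OF q]] \<sigma>(2)[OF r] by (rule subgroup.m_closed[OF Zs])
    finally show "inv (q \<otimes> r) \<otimes> (\<sigma> q \<otimes> \<sigma> r) \<in> Z" .
  qed
  with \<sigma> show ?thesis by blast
qed

lemma (in group) perturbed_generators_conj: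
  assumes fin: "finite (carrier G)" and Z: "Z \<lhd> G" "comm_group (G\<lparr>carrier := Z\<rparr>)"
    and g: "g ` I \<subseteq> carrier G" and n: "n ` I \<subseteq> Z"
    and cop_H: "coprime (card (generate G (g ` I))) (card Z)"
    and cop_K: "coprime (card (generate G ((\<lambda>i. g i \<otimes> n i) ` I))) (card Z)"
  shows "\<exists>v\<in>Z. \<forall>i\<in>I. g i \<otimes> n i = inv v \<otimes> g i \<otimes> v"
proof -
  define H where "H = generate G (g ` I)"
  define K where "K = generate G ((\<lambda>i. g i \<otimes> n i) ` I)"
  have Zs: "subgroup Z G" using normal_imp_subgroup[OF Z(1)] .
  have gn: "g i \<in> carrier G" "n i \<in> carrier G" "n i \<in> Z" if "i \<in> I" for i
    using that g n subgroup.mem_carrier[OF Zs] by auto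
  have H: "subgroup H G" unfolding H_def using generate_is_subgroup[OF g] .
  have K: "subgroup K G" unfolding K_def using gn by (intro generate_is_subgroup) auto
  have gnK: "g i \<otimes> n i \<in> K" if "i \<in> I" for i
    unfolding K_def using that by (auto intro: generate.incl)
  have KZ: "K \<inter> Z = {\<one>}"
    using coprime_subgroups_inter_trivial[OF K Zs] cop_K unfolding K_def by simp
  have "g ` I \<subseteq> Z <#> K"
  proof (rule image_subsetI)
    fix i assume i: "i \<in> I"
    have "g i = (g i \<otimes> inv (n i) \<otimes> inv (g i)) \<otimes> (g i \<otimes> n i)"
      using gn[OF i] by (simp add: m_assoc)
    moreover have "g i \<otimes> inv (n i) \<otimes> inv (g i) \<in> Z"
      using normal.inv_op_closed2[OF Z(1) gn(1)[OF i] subgroup.m_inv_closed[OF Zs gn(3)[OF i]]] .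
    ultimately show "g i \<in> Z <#> K" unfolding set_mult_def using gnK[OF i] by blast
  qed
  then have "H \<subseteq> Z <#> K"
    unfolding H_def by (rule generate_subgroup_incl[OF _ mult_norm_subgroup[OF Z(1) K]])
  then obtain \<sigma> where \<sigma>: "\<And>q. q \<in> H \<Longrightarrow> \<sigma> q \<in> K" "\<And>q. q \<in> H \<Longrightarrow> inv q \<otimes> \<sigma> q \<in> Z"
    and hom: "\<And>q r. q \<in> H \<Longrightarrow> r \<in> H \<Longrightarrow> \<sigma> (q \<otimes> r) = \<sigma> q \<otimes> \<sigma> r"
    using exists_hom_into_complement[OF Z(1) K KZ H] by blast
  have "\<sigma> ` H \<subseteq> carrier G" using \<sigma>(1) subgroup.mem_carrier[OF K] by blast
  then obtain v where v: "v \<in> Z" and conj: "\<And>q. q \<in> H \<Longrightarrow> \<sigma> q = inv v \<otimes> q \<otimes> v"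
    using coset_preserving_hom_is_conj[OF Z H finite_subset[OF subgroup.subset[OF H] fin] _ _ \<sigma>(2) hom]
      cop_H unfolding H_def by blast
  have "g i \<otimes> n i = inv v \<otimes> g i \<otimes> v" if i: "i \<in> I" for i
  proof -
    have giH: "g i \<in> H" unfolding H_def using i by (auto intro: generate.incl)
    have "g i \<otimes> n i = \<sigma> (g i)"
      using complement_coset_rep_unique[OF Zs K KZ gn(1)[OF i] gnK[OF i] \<sigma>(1)[OF giH] _ \<sigma>(2)[OF giH]]
        gn[OF i] by simp
    then show ?thesis using conj[OF giH] by simp
  qed
  with v show ?thesis by blast
qed

lemma (in group) exists_pair_not_simultaneously_conj:
  assumes Z: "Z \<subseteq> carrier G" "2 \<le> card Z" and a: "a \<in> carrier G" and b: "b \<in> carrier G"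
  shows "\<exists>n1\<in>Z. \<exists>n2\<in>Z. \<not> (\<exists>v\<in>Z. a \<otimes> n1 = inv v \<otimes> a \<otimes> v \<and> b \<otimes> n2 = inv v \<otimes> b \<otimes> v)"
proof (rule ccontr)
  assume all_conj: "\<not> ?thesis"
  have "Z \<times> Z \<subseteq> (\<lambda>v. (inv a \<otimes> (inv v \<otimes> a \<otimes> v), inv b \<otimes> (inv v \<otimes> b \<otimes> v))) ` Z"
  proof (rule subsetI, clarify)
    fix n1 n2 assume n: "n1 \<in> Z" "n2 \<in> Z"
    with all_conj obtain v where v: "v \<in> Z" "a \<otimes> n1 = inv v \<otimes> a \<otimes> v" "b \<otimes> n2 = inv v \<otimes> b \<otimes> v"
      by blast
    have "n1 = inv a \<otimes> (inv v \<otimes> a \<otimes> v)" "n2 = inv b \<otimes> (inv v \<otimes> b \<otimes> v)"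
      using v(2,3)[symmetric] n Z(1) a b by (auto simp: inv_m_cancel_left subsetD)
    with v(1) show "(n1, n2) \<in> (\<lambda>v. (inv a \<otimes> (inv v \<otimes> a \<otimes> v), inv b \<otimes> (inv v \<otimes> b \<otimes> v))) ` Z"
      by blast
  qed
  moreover have "finite Z" using Z(2) by (metis card.infinite not_numeral_le_zero)
  ultimately have "card Z * card Z \<le> card Z"
    using surj_card_le[of Z "Z \<times> Z"] by (simp add: card_cartesian_product)
  moreover have "2 * card Z \<le> card Z * card Z" using Z(2) by (rule mult_right_mono) simp
  ultimately show False using Z(2) by linarith
qed

lemma (in group) exists_perturbation_p_dvd_card_generate:
  assumes fin: "finite (carrier G)" and Z: "Z \<lhd> G" "comm_group (G\<lparr>carrier := Z\<rparr>)"
    and p: "Factorial_Ring.prime p" and card_Z: "card Z = p ^ j" "j \<noteq> 0"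
    and x1: "x1 \<in> carrier G" and x2: "x2 \<in> carrier G"
  shows "\<exists>n1\<in>Z. \<exists>n2\<in>Z. p dvd card (generate G {x1 \<otimes> n1, x2 \<otimes> n2})"
proof (rule ccontr)
  assume no_p: "\<not> ?thesis"
  have cop: "coprime (card (generate G {x1 \<otimes> n1, x2 \<otimes> n2})) (card Z)"
    if "n1 \<in> Z" "n2 \<in> Z" for n1 n2
  proof -
    have "coprime p (card (generate G {x1 \<otimes> n1, x2 \<otimes> n2}))"
      using prime_imp_coprime[OF p] no_p that by blast
    then show ?thesis using card_Z(1) by (simp add: coprime_commute)
  qed
  have Zs: "subgroup Z G" using normal_imp_subgroup[OF Z(1)] .
  have "2 \<le> card Z"
    using card_Z prime_ge_2_nat[OF p] self_le_power[of p j] by simp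
  then obtain n1 n2 where n: "n1 \<in> Z" "n2 \<in> Z"
    and not_conj: "\<not> (\<exists>v\<in>Z. x1 \<otimes> n1 = inv v \<otimes> x1 \<otimes> v \<and> x2 \<otimes> n2 = inv v \<otimes> x2 \<otimes> v)"
    using exists_pair_not_simultaneously_conj[OF subgroup.subset[OF Zs] _ x1 x2] by blast
  \<comment> \<open>Generators indexed by \<open>bool\<close>, since \<open>x1 = x2\<close> is allowed.\<close>
  define g where "g i = (if i then x1 else x2)" for i :: bool
  define n where "n i = (if i then n1 else n2)" for i :: bool
  have g_img: "g ` UNIV = {x1, x2}" and gn_img: "(\<lambda>i. g i \<otimes> n i) ` UNIV = {x1 \<otimes> n1, x2 \<otimes> n2}"
    by (auto simp: g_def n_def UNIV_bool)
  have "\<exists>v\<in>Z. \<forall>i\<in>UNIV. g i \<otimes> n i = inv v \<otimes> g i \<otimes> v"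
  proof (rule perturbed_generators_conj[OF fin Z])
    show "g ` UNIV \<subseteq> carrier G" using g_img x1 x2 by simp
    show "n ` UNIV \<subseteq> Z" using n by (auto simp: n_def)
    show "coprime (card (generate G (g ` UNIV))) (card Z)"
      using cop[OF subgroup.one_closed[OF Zs] subgroup.one_closed[OF Zs]] x1 x2 g_img by simp
    show "coprime (card (generate G ((\<lambda>i. g i \<otimes> n i) ` UNIV))) (card Z)"
      using cop[OF n] gn_img by simp
  qed
  then obtain v where "v \<in> Z" "g True \<otimes> n True = inv v \<otimes> g True \<otimes> v"
    "g False \<otimes> n False = inv v \<otimes> g False \<otimes> v"
    by blast
  with not_conj show False by (simp add: g_def n_def)
qed

theorem lemma2p3:
  fixes G (structure) and N :: "'a set" and p a :: nat and x1 x2 :: 'a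
  assumes "group G" and "finite (carrier G)"
    and "N \<lhd> G" and "N \<noteq> {\<one>}"
    and "Factorial_Ring.prime p" and "card N = p ^ a"
    and "x1 \<in> carrier G" and "x2 \<in> carrier G"
  shows "\<exists>n1\<in>N. \<exists>n2\<in>N. p dvd card (generate G {x1 \<otimes> n1, x2 \<otimes> n2})"
proof -
  interpret group G by fact
  obtain Z j where Z: "Z \<lhd> G" "comm_group (G\<lparr>carrier := Z\<rparr>)" "Z \<subseteq> N"
    and card_Z: "card Z = p ^ j" "j \<noteq> 0"
    using exists_abelian_normal_p_subgroup[OF assms(2-6)] by blast
  with exists_perturbation_p_dvd_card_generate[OF assms(2) Z(1,2) assms(5) card_Z assms(7,8)]
  show ?thesis by blast
qed

end
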